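(* Let $B$ be a skew left brace, $S$ a subbrace and $I$ an ideal of $B$ such that $I$ is an abelian brace and $B=SI=S+I$. Then (1) $I\cap S$ is an ideal of $B$; and (2) $S$ is a maximal subbrace of $B$ if and only if $I/(I\cap S)$ is a chief factor of $B$.
   Context: A skew left brace (brace) is a set $B$ with two group structures $(B,+)$ and $(B,\cdot)$ with $a(b+c)=ab-a+ac$; $\lambda_a(b)=-a+ab$. A subbrace is a subset that is a subgroup of both groups; a maximal subbrace is a proper subbrace not contained in any other proper subbrace. An ideal is a subset that is a normal subgroup of both groups and $\lambda_b$-invariant for all $b$. A brace $I$ is abelian if $xy=x+y=y+x$ for all $x,y\in I$. For ideals $J\subseteq I$ of $B$, $I/J$ is a chief factor of $B$ if $I/J$ is a minimal nonzero ideal of $B/J$ (i.e. $J\ne I$ and no ideal $L$ of $B$ satisfies $J\subsetneq L\subsetneq I$). *)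

theory Defs
  imports "HOL-Algebra.Coset"
begin

text \<open>A skew left brace is represented by two HOL-Algebra monoid structures on the same
carrier: A (the additive group (B,+)) and M (the multiplicative group (B,.)).\<close>

definition skew_brace :: "'a monoid \<Rightarrow> 'a monoid \<Rightarrow> bool" where
  "skew_brace A M \<longleftrightarrow> group A \<and> group M \<and> carrier A = carrier M \<and>
     (\<forall>a\<in>carrier A. \<forall>b\<in>carrier A. \<forall>c\<in>carrier A.
        a \<otimes>\<^bsub>M\<^esub> (b \<otimes>\<^bsub>A\<^esub> c)
        = ((a \<otimes>\<^bsub>M\<^esub> b) \<otimes>\<^bsub>A\<^esub> inv\<^bsub>A\<^esub> a) \<otimes>\<^bsub>A\<^esub> (a \<otimes>\<^bsub>M\<^esub> c))"

definition brace_lambda :: "'a monoid \<Rightarrow> 'a monoid \<Rightarrow> 'a \<Rightarrow> 'a \<Rightarrow> 'a" where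
  "brace_lambda A M a b = inv\<^bsub>A\<^esub> a \<otimes>\<^bsub>A\<^esub> (a \<otimes>\<^bsub>M\<^esub> b)"

definition subbrace :: "'a monoid \<Rightarrow> 'a monoid \<Rightarrow> 'a set \<Rightarrow> bool" where
  "subbrace A M S \<longleftrightarrow> subgroup S A \<and> subgroup S M"

definition maximal_subbrace :: "'a monoid \<Rightarrow> 'a monoid \<Rightarrow> 'a set \<Rightarrow> bool" where
  "maximal_subbrace A M S \<longleftrightarrow> subbrace A M S \<and> S \<noteq> carrier A \<and>
     (\<forall>T. subbrace A M T \<and> S \<subseteq> T \<and> T \<noteq> carrier A \<longrightarrow> T = S)"

definition brace_ideal :: "'a monoid \<Rightarrow> 'a monoid \<Rightarrow> 'a set \<Rightarrow> bool" where
  "brace_ideal A M I \<longleftrightarrow> I \<lhd> A \<and> I \<lhd> M \<and>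
     (\<forall>b\<in>carrier A. \<forall>x\<in>I. brace_lambda A M b x \<in> I)"

definition abelian_sub :: "'a monoid \<Rightarrow> 'a monoid \<Rightarrow> 'a set \<Rightarrow> bool" where
  "abelian_sub A M I \<longleftrightarrow> (\<forall>x\<in>I. \<forall>y\<in>I.
     x \<otimes>\<^bsub>M\<^esub> y = x \<otimes>\<^bsub>A\<^esub> y \<and> x \<otimes>\<^bsub>A\<^esub> y = y \<otimes>\<^bsub>A\<^esub> x)"

definition chief_factor :: "'a monoid \<Rightarrow> 'a monoid \<Rightarrow> 'a set \<Rightarrow> 'a set \<Rightarrow> bool" where
  "chief_factor A M I J \<longleftrightarrow> brace_ideal A M I \<and> brace_ideal A M J \<and> J \<subseteq> I \<and> J \<noteq> I \<and>
     \<not> (\<exists>L. brace_ideal A M L \<and> J \<subset> L \<and> L \<subset> I)"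

end

theory Submission
  imports Defs "HOL-Algebra.Zassenhaus"
begin

text \<open>Because \<open>I\<close> is abelian, conjugating (in either group) or applying \<open>\<lambda>\<close> by an element
\<open>s i\<close> of \<open>B = S I\<close> acts on \<open>I\<close> just as the factor \<open>s \<in> S\<close> does; this makes \<open>I \<inter> S\<close> an ideal.
By Dedekind's modular law the maps \<open>T \<mapsto> I \<inter> T\<close> and \<open>L \<mapsto> S + L\<close> are mutually inverse
order isomorphisms between the subbraces containing \<open>S\<close> and the ideals between \<open>I \<inter> S\<close> and \<open>I\<close>
(for an ideal \<open>L\<close> the sum \<open>S + L\<close> equals the product \<open>S L\<close> and is a subbrace), with \<open>B\<close>
corresponding to \<open>I\<close>.\<close>

lemma set_multI: "x \<in> X \<Longrightarrow> y \<in> Y \<Longrightarrow> z = x \<otimes>\<^bsub>G\<^esub> y \<Longrightarrow> z \<in> X <#>\<^bsub>G\<^esub> Y"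
  unfolding set_mult_def by blast

lemma set_multE:
  "z \<in> X <#>\<^bsub>G\<^esub> Y \<Longrightarrow> (\<And>x y. x \<in> X \<Longrightarrow> y \<in> Y \<Longrightarrow> z = x \<otimes>\<^bsub>G\<^esub> y \<Longrightarrow> P) \<Longrightarrow> P"
  unfolding set_mult_def by blast

lemma (in group) set_mult_subset_subgroup:
  "subgroup H G \<Longrightarrow> X \<subseteq> H \<Longrightarrow> Y \<subseteq> H \<Longrightarrow> X <#> Y \<subseteq> H"
  by (auto elim!: set_multE intro: subgroup.m_closed)

lemma (in group) subset_set_mult_subgroup_right:
  assumes "subgroup H G" "X \<subseteq> carrier G"
  shows "X \<subseteq> X <#> H"
proof
  fix x assume "x \<in> X"
  then show "x \<in> X <#> H"
    using assms by (intro set_multI[of _ _ "\<one>"]) (auto intro: subgroup.one_closed)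
qed

lemma (in group) Int_set_mult_modular:
  assumes K: "subgroup K G" and NK: "N \<subseteq> K" and H: "H \<subseteq> carrier G"
  shows "K \<inter> (N <#> H) = N <#> (K \<inter> H)"
proof
  show "K \<inter> (N <#> H) \<subseteq> N <#> (K \<inter> H)"
  proof
    fix k assume "k \<in> K \<inter> (N <#> H)"
    then have k: "k \<in> K" and "k \<in> N <#> H" by auto
    from this(2) obtain n h where n: "n \<in> N" and h: "h \<in> H" and knh: "k = n \<otimes> h"
      by (rule set_multE)
    have n_carr: "n \<in> carrier G" using n NK subgroup.mem_carrier[OF K] by blast
    have h_carr: "h \<in> carrier G" using h H by blast
    have "h = inv n \<otimes> k"
      unfolding knh using n_carr h_carr by (simp add: m_assoc[symmetric])
    moreover have "inv n \<otimes> k \<in> K"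
      using k n NK by (blast intro: subgroup.m_closed[OF K] subgroup.m_inv_closed[OF K])
    ultimately have "h \<in> K \<inter> H" using h by simp
    then show "k \<in> N <#> (K \<inter> H)" by (rule set_multI[OF n _ knh])
  qed
  have "N <#> (K \<inter> H) \<subseteq> K" by (rule set_mult_subset_subgroup[OF K NK]) blast
  moreover have "N <#> (K \<inter> H) \<subseteq> N <#> H" by (rule mono_set_mult) blast+
  ultimately show "N <#> (K \<inter> H) \<subseteq> K \<inter> (N <#> H)" by blast
qed

lemma (in group) conj_mult_commuting:
  assumes "s \<in> carrier G" "i \<in> carrier G" "x \<in> carrier G" "i \<otimes> x = x \<otimes> i"
  shows "(s \<otimes> i) \<otimes> x \<otimes> inv (s \<otimes> i) = s \<otimes> x \<otimes> inv s"
proof -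
  have "(s \<otimes> i) \<otimes> x \<otimes> inv (s \<otimes> i) = s \<otimes> (i \<otimes> x) \<otimes> (inv i \<otimes> inv s)"
    using assms by (simp add: inv_mult_group m_assoc)
  also have "\<dots> = s \<otimes> (x \<otimes> i) \<otimes> (inv i \<otimes> inv s)"
    using assms by simp
  also have "\<dots> = s \<otimes> x \<otimes> ((i \<otimes> inv i) \<otimes> inv s)"
    using assms by (simp add: m_assoc, simp add: m_assoc[symmetric])
  also have "\<dots> = s \<otimes> x \<otimes> inv s"
    using assms by simp
  finally show ?thesis .
qed

lemma (in group) abelian_normal_Int_supplement:
  assumes N: "N \<lhd> G" and H: "subgroup H G" and supp: "carrier G \<subseteq> H <#> N"
    and comm: "\<And>x y. x \<in> N \<Longrightarrow> y \<in> N \<Longrightarrow> x \<otimes> y = y \<otimes> x"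
  shows "N \<inter> H \<lhd> G"
  unfolding normal_inv_iff
proof (intro conjI ballI)
  have N_sub: "subgroup N G" using N normal_imp_subgroup by blast
  show "subgroup (N \<inter> H) G" using subgroups_Inter_pair N_sub H by blast
  fix g x assume g: "g \<in> carrier G" and x: "x \<in> N \<inter> H"
  from g supp have "g \<in> H <#> N" by blast
  then obtain s i where s: "s \<in> H" and i: "i \<in> N" and g_eq: "g = s \<otimes> i"
    by (rule set_multE)
  have carr: "s \<in> carrier G" "i \<in> carrier G" "x \<in> carrier G"
    using s i x H N_sub by (auto intro: subgroup.mem_carrier)
  have "i \<otimes> x = x \<otimes> i" using comm i x by blast
  then have "g \<otimes> x \<otimes> inv g = s \<otimes> x \<otimes> inv s"
    unfolding g_eq by (rule conj_mult_commuting[OF carr])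
  moreover have "s \<otimes> x \<otimes> inv s \<in> N"
    using x by (intro normal_invE(2)[OF N carr(1)]) simp
  moreover have "s \<otimes> x \<otimes> inv s \<in> H"
    using s x H by (blast intro: subgroup.m_closed subgroup.m_inv_closed)
  ultimately show "g \<otimes> x \<otimes> inv g \<in> N \<inter> H" by (simp only: IntI)
qed

lemma (in group) subgroup_eq_carrier_if_supplement_subset:
  assumes "subgroup H G" "X <#> N = carrier G" "X \<subseteq> H" "N \<subseteq> H"
  shows "H = carrier G"
  using set_mult_subset_subgroup[OF assms(1,3,4)] assms(1,2) subgroup.subset by blast

locale skew_left_brace =
  fixes A M :: "'a monoid"
  assumes skew_brace: "skew_brace A M"
begin

sublocale add: group A
  using skew_brace unfolding skew_brace_def by blast

sublocale mul: group M
  using skew_brace unfolding skew_brace_def by blast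

lemma carrier_mult_eq [simp]: "carrier M = carrier A"
  using skew_brace unfolding skew_brace_def by blast

lemma mult_closed [simp]:
  "\<lbrakk> a \<in> carrier A; b \<in> carrier A \<rbrakk> \<Longrightarrow> a \<otimes>\<^bsub>M\<^esub> b \<in> carrier A"
  using mul.m_closed by simp

lemma inv_mult_closed [simp]: "a \<in> carrier A \<Longrightarrow> inv\<^bsub>M\<^esub> a \<in> carrier A"
  using mul.inv_closed by simp

lemma brace_distrib:
  "\<lbrakk> a \<in> carrier A; b \<in> carrier A; c \<in> carrier A \<rbrakk> \<Longrightarrow>
     a \<otimes>\<^bsub>M\<^esub> (b \<otimes>\<^bsub>A\<^esub> c) = (a \<otimes>\<^bsub>M\<^esub> b \<otimes>\<^bsub>A\<^esub> inv\<^bsub>A\<^esub> a) \<otimes>\<^bsub>A\<^esub> (a \<otimes>\<^bsub>M\<^esub> c)"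
  using skew_brace unfolding skew_brace_def by blast

lemma one_mult_eq [simp]: "\<one>\<^bsub>M\<^esub> = \<one>\<^bsub>A\<^esub>"
proof -
  have one_M: "\<one>\<^bsub>M\<^esub> \<in> carrier A" using mul.one_closed by simp
  have "\<one>\<^bsub>A\<^esub> = \<one>\<^bsub>M\<^esub> \<otimes>\<^bsub>M\<^esub> (\<one>\<^bsub>A\<^esub> \<otimes>\<^bsub>A\<^esub> \<one>\<^bsub>A\<^esub>)" by simp
  also have "\<dots> = inv\<^bsub>A\<^esub> \<one>\<^bsub>M\<^esub>"
    using brace_distrib[OF one_M add.one_closed add.one_closed] one_M by simp
  finally show ?thesis using one_M by (metis add.inv_inv add.inv_one)
qed

lemma mult_eq_add_lambda:
  "\<lbrakk> a \<in> carrier A; b \<in> carrier A \<rbrakk> \<Longrightarrow> a \<otimes>\<^bsub>M\<^esub> b = a \<otimes>\<^bsub>A\<^esub> brace_lambda A M a b"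
  unfolding brace_lambda_def by (simp add: add.m_assoc[symmetric])

lemma lambda_mult_inv:
  assumes a: "a \<in> carrier A" and b: "b \<in> carrier A"
  shows "inv\<^bsub>M\<^esub> a \<otimes>\<^bsub>M\<^esub> (a \<otimes>\<^bsub>A\<^esub> b) = brace_lambda A M (inv\<^bsub>M\<^esub> a) b"
proof -
  have a': "inv\<^bsub>M\<^esub> a \<in> carrier A" using a by simp
  have "inv\<^bsub>M\<^esub> a \<otimes>\<^bsub>M\<^esub> a = \<one>\<^bsub>A\<^esub>" using mul.l_inv a by simp
  then show ?thesis
    unfolding brace_lambda_def using brace_distrib[OF a' a b] a' by simp
qed

lemma set_mult_add_eq_mult:
  assumes S: "S \<subseteq> carrier A" and L: "L \<subseteq> carrier A"
    and lambda_L: "\<And>b x. b \<in> carrier A \<Longrightarrow> x \<in> L \<Longrightarrow> brace_lambda A M b x \<in> L"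
  shows "S <#>\<^bsub>A\<^esub> L = S <#>\<^bsub>M\<^esub> L"
proof
  show "S <#>\<^bsub>A\<^esub> L \<subseteq> S <#>\<^bsub>M\<^esub> L"
  proof
    fix t assume "t \<in> S <#>\<^bsub>A\<^esub> L"
    then obtain s l where s: "s \<in> S" and l: "l \<in> L" and t: "t = s \<otimes>\<^bsub>A\<^esub> l"
      by (rule set_multE)
    have carr: "s \<in> carrier A" "l \<in> carrier A" using s l S L by blast+
    have t_carr: "t \<in> carrier A" unfolding t using carr by simp
    have "t = s \<otimes>\<^bsub>M\<^esub> (inv\<^bsub>M\<^esub> s \<otimes>\<^bsub>M\<^esub> t)"
      using carr t_carr by (simp add: mul.m_assoc[symmetric])
    also have "\<dots> = s \<otimes>\<^bsub>M\<^esub> brace_lambda A M (inv\<^bsub>M\<^esub> s) l"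
      unfolding t using lambda_mult_inv carr by simp
    finally show "t \<in> S <#>\<^bsub>M\<^esub> L"
      using s l carr lambda_L by (intro set_multI) auto
  qed
  show "S <#>\<^bsub>M\<^esub> L \<subseteq> S <#>\<^bsub>A\<^esub> L"
  proof
    fix t assume "t \<in> S <#>\<^bsub>M\<^esub> L"
    then obtain s l where s: "s \<in> S" and l: "l \<in> L" and t: "t = s \<otimes>\<^bsub>M\<^esub> l"
      by (rule set_multE)
    have carr: "s \<in> carrier A" "l \<in> carrier A" using s l S L by blast+
    show "t \<in> S <#>\<^bsub>A\<^esub> L"
      using s lambda_L[OF carr(1) l] mult_eq_add_lambda[OF carr] unfolding t
      by (intro set_multI)
  qed
qed

lemma subbrace_set_mult_ideal:
  assumes S: "subbrace A M S" and L: "brace_ideal A M L"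
  shows "subbrace A M (S <#>\<^bsub>A\<^esub> L)"
proof -
  have "S <#>\<^bsub>A\<^esub> L = S <#>\<^bsub>M\<^esub> L"
    using S L unfolding subbrace_def brace_ideal_def
    by (intro set_mult_add_eq_mult) (auto dest: subgroup.subset normal_imp_subgroup)
  moreover have "subgroup (S <#>\<^bsub>G\<^esub> L) G" if "group G" "subgroup S G" "L \<lhd> G" for G
    using group.commut_normal[OF that] group.mult_norm_subgroup[OF that(1,3,2)] by simp
  ultimately show ?thesis
    using S L add.is_group mul.is_group unfolding subbrace_def brace_ideal_def by metis
qed

lemma lambda_mult_commuting:
  assumes carr: "s \<in> carrier A" "i \<in> carrier A" "x \<in> carrier A"
    and comm: "i \<otimes>\<^bsub>M\<^esub> x = x \<otimes>\<^bsub>A\<^esub> i"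
  defines "b \<equiv> s \<otimes>\<^bsub>M\<^esub> i"
  shows "brace_lambda A M b x = inv\<^bsub>A\<^esub> b \<otimes>\<^bsub>A\<^esub> (s \<otimes>\<^bsub>M\<^esub> x \<otimes>\<^bsub>A\<^esub> inv\<^bsub>A\<^esub> s) \<otimes>\<^bsub>A\<^esub> b"
proof -
  have "b \<otimes>\<^bsub>M\<^esub> x = s \<otimes>\<^bsub>M\<^esub> (x \<otimes>\<^bsub>A\<^esub> i)"
    unfolding b_def using carr comm by (simp add: mul.m_assoc)
  also have "\<dots> = (s \<otimes>\<^bsub>M\<^esub> x \<otimes>\<^bsub>A\<^esub> inv\<^bsub>A\<^esub> s) \<otimes>\<^bsub>A\<^esub> b"
    unfolding b_def using brace_distrib carr by blast
  finally show ?thesis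
    unfolding brace_lambda_def b_def using carr by (simp add: add.m_assoc)
qed

lemma ideal_Int_subbrace:
  assumes T: "subbrace A M T" and I: "brace_ideal A M I" and ab: "abelian_sub A M I"
    and supp: "carrier A \<subseteq> T <#>\<^bsub>A\<^esub> I"
  shows "brace_ideal A M (I \<inter> T)"
proof -
  have T_A: "subgroup T A" and T_M: "subgroup T M" using T unfolding subbrace_def by auto
  have I_A: "I \<lhd> A" and I_M: "I \<lhd> M"
    and lambda_I: "\<And>b x. b \<in> carrier A \<Longrightarrow> x \<in> I \<Longrightarrow> brace_lambda A M b x \<in> I"
    using I unfolding brace_ideal_def by auto
  have I_carr: "I \<subseteq> carrier A" using I_A normal_imp_subgroup subgroup.subset by blast
  have T_carr: "T \<subseteq> carrier A" using T_A subgroup.subset by blast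
  have add_eq_mult: "\<And>x y. x \<in> I \<Longrightarrow> y \<in> I \<Longrightarrow> x \<otimes>\<^bsub>M\<^esub> y = x \<otimes>\<^bsub>A\<^esub> y"
    and add_comm: "\<And>x y. x \<in> I \<Longrightarrow> y \<in> I \<Longrightarrow> x \<otimes>\<^bsub>A\<^esub> y = y \<otimes>\<^bsub>A\<^esub> x"
    using ab unfolding abelian_sub_def by auto
  have supp_M: "carrier M \<subseteq> T <#>\<^bsub>M\<^esub> I"
    using supp set_mult_add_eq_mult[OF T_carr I_carr lambda_I] by simp
  have normal_A: "I \<inter> T \<lhd> A"
    using add.abelian_normal_Int_supplement[OF I_A T_A supp add_comm] .
  have normal_M: "I \<inter> T \<lhd> M"
    using mul.abelian_normal_Int_supplement[OF I_M T_M supp_M] add_eq_mult add_comm by simp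
  have "brace_lambda A M b x \<in> I \<inter> T" if b: "b \<in> carrier A" and x: "x \<in> I \<inter> T" for b x
  proof -
    from b supp_M have "b \<in> T <#>\<^bsub>M\<^esub> I" by auto
    then obtain s i where s: "s \<in> T" and i: "i \<in> I" and b_eq: "b = s \<otimes>\<^bsub>M\<^esub> i"
      by (rule set_multE)
    have carr: "s \<in> carrier A" "i \<in> carrier A" "x \<in> carrier A" using s i x T_carr I_carr by auto
    define y where "y = s \<otimes>\<^bsub>M\<^esub> x \<otimes>\<^bsub>A\<^esub> inv\<^bsub>A\<^esub> s"
    have "y = s \<otimes>\<^bsub>A\<^esub> brace_lambda A M s x \<otimes>\<^bsub>A\<^esub> inv\<^bsub>A\<^esub> s"
      unfolding y_def using mult_eq_add_lambda carr by simp
    then have "y \<in> I" using add.normal_invE(2)[OF I_A] lambda_I carr x by simp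
    moreover have "y \<in> T" unfolding y_def using s x T_A T_M
      by (simp add: subgroup.m_closed subgroup.m_inv_closed)
    ultimately have "y \<in> I \<inter> T" by simp
    then have "inv\<^bsub>A\<^esub> b \<otimes>\<^bsub>A\<^esub> y \<otimes>\<^bsub>A\<^esub> inv\<^bsub>A\<^esub> (inv\<^bsub>A\<^esub> b) \<in> I \<inter> T"
      using b by (intro add.normal_invE(2)[OF normal_A]) simp_all
    moreover have "i \<otimes>\<^bsub>M\<^esub> x = x \<otimes>\<^bsub>A\<^esub> i" using add_eq_mult add_comm i x by simp
    ultimately show ?thesis
      unfolding b_eq y_def using lambda_mult_commuting[OF carr] carr b b_eq by simp
  qed
  then show ?thesis unfolding brace_ideal_def using normal_A normal_M by blast
qed

lemma chief_factor_if_maximal_subbrace: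
  assumes S: "subbrace A M S" and I: "brace_ideal A M I" and IS: "brace_ideal A M (I \<inter> S)"
    and supp: "S <#>\<^bsub>A\<^esub> I = carrier A" and max: "maximal_subbrace A M S"
  shows "chief_factor A M I (I \<inter> S)"
proof -
  have S_A: "subgroup S A" using S unfolding subbrace_def by blast
  have I_A: "subgroup I A" using I unfolding brace_ideal_def by (blast dest: normal_imp_subgroup)
  have IS_A: "subgroup (I \<inter> S) A" using add.subgroups_Inter_pair[OF I_A S_A] .
  have S_carr: "S \<subseteq> carrier A" using S_A subgroup.subset by blast
  have "S \<noteq> carrier A" using max unfolding maximal_subbrace_def by blast
  then have "I \<inter> S \<noteq> I"
    using add.subgroup_eq_carrier_if_supplement_subset[OF S_A supp] by blast
  moreover have "\<not> (brace_ideal A M L \<and> I \<inter> S \<subset> L \<and> L \<subset> I)" for L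
  proof
    assume "brace_ideal A M L \<and> I \<inter> S \<subset> L \<and> L \<subset> I"
    then have L: "brace_ideal A M L" and IS_L: "I \<inter> S \<subset> L" and L_I: "L \<subset> I" by auto
    have L_A: "L \<lhd> A" using L unfolding brace_ideal_def by blast
    have L_sub: "subgroup L A" using L_A normal_imp_subgroup by blast
    have L_carr: "L \<subseteq> carrier A" using L_sub subgroup.subset by blast
    define T where "T = S <#>\<^bsub>A\<^esub> L"
    have T: "subbrace A M T" unfolding T_def using subbrace_set_mult_ideal[OF S L] .
    have "S \<subseteq> T" unfolding T_def using add.subset_set_mult_subgroup_right[OF L_sub S_carr] .
    have "I \<inter> T = I \<inter> (L <#>\<^bsub>A\<^esub> S)" unfolding T_def using add.commut_normal[OF S_A L_A] by simp
    also have "\<dots> = L <#>\<^bsub>A\<^esub> (I \<inter> S)"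
      using add.Int_set_mult_modular[OF I_A _ S_carr] L_I by blast
    also have "\<dots> = L"
      using add.set_mult_subset_subgroup[OF L_sub _ IS_L[THEN psubset_imp_subset]]
        add.subset_set_mult_subgroup_right[OF IS_A L_carr] by blast
    finally have IT: "I \<inter> T = L" .
    show False
    proof (cases "T = carrier A")
      case True
      then show False using IT L_I I_A subgroup.subset by blast
    next
      case False
      then have "T = S" using max T \<open>S \<subseteq> T\<close> unfolding maximal_subbrace_def by blast
      then show False using IT IS_L by blast
    qed
  qed
  ultimately show ?thesis unfolding chief_factor_def using I IS by blast
qed

lemma maximal_subbrace_if_chief_factor:
  assumes S: "subbrace A M S" and I: "brace_ideal A M I" and ab: "abelian_sub A M I"
    and supp: "S <#>\<^bsub>A\<^esub> I = carrier A" and chief: "chief_factor A M I (I \<inter> S)"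
  shows "maximal_subbrace A M S"
proof -
  have S_A: "subgroup S A" using S unfolding subbrace_def by blast
  have I_A: "subgroup I A" using I unfolding brace_ideal_def by (blast dest: normal_imp_subgroup)
  have IS_A: "subgroup (I \<inter> S) A" using add.subgroups_Inter_pair[OF I_A S_A] .
  have S_carr: "S \<subseteq> carrier A" using S_A subgroup.subset by blast
  have I_carr: "I \<subseteq> carrier A" using I_A subgroup.subset by blast
  have IS_I: "I \<inter> S \<noteq> I" and minimal: "\<nexists>L. brace_ideal A M L \<and> I \<inter> S \<subset> L \<and> L \<subset> I"
    using chief unfolding chief_factor_def by auto
  have "T = S" if T: "subbrace A M T" and ST: "S \<subseteq> T" and T_ne: "T \<noteq> carrier A" for T
  proof -
    have T_A: "subgroup T A" using T unfolding subbrace_def by blast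
    have "carrier A \<subseteq> T <#>\<^bsub>A\<^esub> I" using supp mono_set_mult[OF ST, of I I A] by simp
    then have "brace_ideal A M (I \<inter> T)" using ideal_Int_subbrace[OF T I ab] by blast
    moreover have "\<not> I \<subseteq> T"
      using add.subgroup_eq_carrier_if_supplement_subset[OF T_A supp ST] T_ne by blast
    ultimately have IT: "I \<inter> T = I \<inter> S" using minimal ST by blast
    have "T = T \<inter> (S <#>\<^bsub>A\<^esub> I)" using supp T_A subgroup.subset by blast
    also have "\<dots> = S <#>\<^bsub>A\<^esub> (I \<inter> S)"
      using add.Int_set_mult_modular[OF T_A ST I_carr] IT by (simp add: Int_commute)
    also have "\<dots> = S"
      using add.set_mult_subset_subgroup[OF S_A order_refl]
        add.subset_set_mult_subgroup_right[OF IS_A S_carr] by blast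
    finally show "T = S" .
  qed
  moreover have "S \<noteq> carrier A" using IS_I I_carr by blast
  ultimately show ?thesis unfolding maximal_subbrace_def using S by blast
qed

end

theorem lemma4p10:
  fixes A M :: "'a monoid" and S I :: "'a set"
  assumes "skew_brace A M"
    and "subbrace A M S"
    and "brace_ideal A M I"
    and "abelian_sub A M I"
    and "S <#>\<^bsub>M\<^esub> I = carrier A"
    and "S <#>\<^bsub>A\<^esub> I = carrier A"
  shows "brace_ideal A M (I \<inter> S) \<and>
         (maximal_subbrace A M S \<longleftrightarrow> chief_factor A M I (I \<inter> S))"
proof -
  interpret skew_left_brace A M using assms(1) by (rule skew_left_brace.intro)
  have ideal: "brace_ideal A M (I \<inter> S)"
    using ideal_Int_subbrace[OF assms(2-4)] assms(6) by simp
  show ?thesis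
    using ideal chief_factor_if_maximal_subbrace[OF assms(2,3) ideal assms(6)]
      maximal_subbrace_if_chief_factor[OF assms(2-4,6)] by blast
qed

end
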